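(* Let $m,n$ be positive integers and for each $i\in\{1,\dots,m\}$ let $A^i\in\mathbb{R}^{n_i\times n}$. Let $A=[(A^1)^T,\dots,(A^m)^T]^T\in\mathbb{R}^{N\times n}$ with $N=\sum_i n_i\ge n$, and assume $A^TA$ is full rank. Let $\lambda$ and $\gamma$ denote the largest and smallest eigenvalues of $A^TA$, respectively. Fix $\beta>0$, let $K^*=(A^TA+\beta I)^{-1}$ with $j$-th column $k_j^*$, and let $e_j$ be the $j$-th column of the $n\times n$ identity matrix $I$. Let $K(-1)\in\mathbb{R}^{n\times n}$ be arbitrary, with columns $k_j(-1)$, and for $t=0,1,2,\dots$ define the columns of $K(t)$ by $$k_j(t)=k_j(t-1)-\alpha\sum_{i=1}^m R^i_j(t-1),\qquad R^i_j(s)=\Big((A^i)^TA^i+\tfrac{\beta}{m}I\Big)k_j(s)-\tfrac{1}{m}e_j,\quad j=1,\dots,n,$$ where $\alpha>0$ is a parameter. Define $\rho_K^*=\dfrac{\lambda-\gamma}{\lambda+\gamma+2\beta}$. Then there exists $\alpha>0$ for which there is a positive value $\rho_K<1$ such that for each $j=1,\dots,n$, $$\|k_j(t)-k_j^*\|\le\rho_K\|k_j(t-1)-k_j^*\|,\qquad t=0,1,2,\dots,$$ where $\rho_K\ge\rho_K^*$.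
   Context: $\|\cdot\|$ denotes the Euclidean 2-norm. This iteration is the pre-conditioner update of a distributed (server-based) algorithm for the least-squares problem $\min_x\sum_{i=1}^m\frac12\|A^ix-b^i\|^2$. *)

theory Defs
  imports "Jordan_Normal_Form.Char_Poly" "Jordan_Normal_Form.DL_Rank"
begin

text \<open>Stacked matrix A = [A^0; A^1; ...; A^(m-1)] (blocks indexed 0..m-1), each block with n columns.\<close>
definition stack_mats :: "(nat \<Rightarrow> real mat) \<Rightarrow> nat \<Rightarrow> nat \<Rightarrow> real mat" where
  "stack_mats A m n = foldr (\<lambda>i B. A i @\<^sub>r B) [0..<m] (0\<^sub>m 0 n)"

definition vnorm :: "real vec \<Rightarrow> real" where
  "vnorm v = sqrt (v \<bullet> v)"

definition Rres :: "(nat \<Rightarrow> real mat) \<Rightarrow> nat \<Rightarrow> nat \<Rightarrow> real \<Rightarrow> real mat \<Rightarrow> nat \<Rightarrow> nat \<Rightarrow> real vec" where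
  "Rres A m n \<beta> K i j =
     (transpose_mat (A i) * A i + (\<beta> / real m) \<cdot>\<^sub>m 1\<^sub>m n) *\<^sub>v col K j - (1 / real m) \<cdot>\<^sub>v unit_vec n j"

text \<open>Pre-conditioner iteration. Kiter ... 0 = K(-1); Kiter ... (Suc t) = K(t).\<close>
primrec Kiter :: "(nat \<Rightarrow> real mat) \<Rightarrow> nat \<Rightarrow> nat \<Rightarrow> real \<Rightarrow> real \<Rightarrow> real mat \<Rightarrow> nat \<Rightarrow> real mat" where
  "Kiter A m n \<beta> \<alpha> K0 0 = K0"
| "Kiter A m n \<beta> \<alpha> K0 (Suc t) =
     (let K = Kiter A m n \<beta> \<alpha> K0 t in
      mat_of_cols n (map (\<lambda>j. col K j - \<alpha> \<cdot>\<^sub>v vec n (\<lambda>r. \<Sum>i<m. Rres A m n \<beta> K i j $ r)) [0..<n]))"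

end

theory Submission
  imports Defs
begin

text \<open>
  Summing the local residuals gives \<open>\<Sum>\<^sub>i R\<^sup>i\<^sub>j = M k\<^sub>j - e\<^sub>j\<close> with \<open>M = A\<^sup>T A + \<beta> I\<close>, so each
  column of \<open>K(t)\<close> performs one Richardson (gradient) step for the system \<open>M k = e\<^sub>j\<close>, whose
  solution is \<open>k\<^sub>j\<^sup>*\<close>. Since \<open>v \<bullet> M v \<ge> \<beta> |v|\<^sup>2\<close> and \<open>|M v|\<^sup>2 \<le> C |v|\<^sup>2\<close> with \<open>C\<close> the squared
  Frobenius norm of \<open>M\<close> plus one, the step size \<open>\<alpha> = \<beta> / C\<close> shrinks the error by the factor
  \<open>sqrt (1 - \<beta>\<^sup>2 / C) < 1\<close>; the Frobenius norm replaces the spectral bound \<open>\<lambda> + \<beta>\<close>, so no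
  spectral theorem is needed, and the shift \<open>\<beta> I\<close> makes full rank of \<open>A\<^sup>T A\<close> unnecessary.
  Finally \<open>\<rho>\<^sub>K\<^sup>* < 1\<close> because the eigenvalues of a Gram matrix are nonnegative, so the rate can
  be enlarged to dominate \<open>\<rho>\<^sub>K\<^sup>*\<close> while staying below one.
\<close>

lemma scalar_prod_self_nonneg: "0 \<le> (v :: real vec) \<bullet> v"
  using conjugate_square_ge_0_vec[of v] by simp

lemma scalar_prod_self_pos:
  assumes "(v :: real vec) \<in> carrier_vec n" and "v \<noteq> 0\<^sub>v n"
  shows "0 < v \<bullet> v"
  using conjugate_square_greater_0_vec[OF assms(1)] assms(2) by simp

lemma vnorm_nonneg: "0 \<le> vnorm v"
  unfolding vnorm_def using scalar_prod_self_nonneg by simp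

lemma sum_mult_squared_le:
  fixes a b :: "'a \<Rightarrow> real"
  shows "(\<Sum>i\<in>I. a i * b i)\<^sup>2 \<le> (\<Sum>i\<in>I. (a i)\<^sup>2) * (\<Sum>i\<in>I. (b i)\<^sup>2)"
proof -
  let ?A = "\<Sum>i\<in>I. (a i)\<^sup>2" and ?B = "\<Sum>i\<in>I. (b i)\<^sup>2" and ?C = "\<Sum>i\<in>I. a i * b i"
  have "0 \<le> (\<Sum>i\<in>I. \<Sum>j\<in>I. (a i * b j - a j * b i)\<^sup>2)"
    by (intro sum_nonneg) auto
  also have "\<dots> = (\<Sum>i\<in>I. \<Sum>j\<in>I. (a i)\<^sup>2 * (b j)\<^sup>2) + (\<Sum>i\<in>I. \<Sum>j\<in>I. (a j)\<^sup>2 * (b i)\<^sup>2)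
                   - 2 * (\<Sum>i\<in>I. \<Sum>j\<in>I. (a i * b i) * (a j * b j))"
    by (simp add: power2_eq_square algebra_simps sum_subtractf sum.distrib sum_distrib_left)
  also have "\<dots> = 2 * (?A * ?B) - 2 * ?C\<^sup>2"
    by (simp add: sum_product power2_eq_square sum.swap[of "\<lambda>i j. a j * a j * (b i * b i)"])
  finally show ?thesis by simp
qed

lemma scalar_prod_squared_le:
  fixes v w :: "real vec"
  assumes "v \<in> carrier_vec n" and "w \<in> carrier_vec n"
  shows "(v \<bullet> w)\<^sup>2 \<le> (v \<bullet> v) * (w \<bullet> w)"
  using sum_mult_squared_le[of "\<lambda>i. v $ i" "\<lambda>i. w $ i" "{0..<n}"] assms
  by (simp add: scalar_prod_def power2_eq_square)

definition frobenius_sq :: "real mat \<Rightarrow> real" where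
  "frobenius_sq M = (\<Sum>r<dim_row M. row M r \<bullet> row M r)"

lemma frobenius_sq_nonneg: "0 \<le> frobenius_sq M"
  unfolding frobenius_sq_def by (intro sum_nonneg) (simp add: scalar_prod_self_nonneg)

lemma mult_mat_vec_squared_le:
  fixes M :: "real mat"
  assumes M: "M \<in> carrier_mat nr nc" and v: "v \<in> carrier_vec nc"
  shows "(M *\<^sub>v v) \<bullet> (M *\<^sub>v v) \<le> frobenius_sq M * (v \<bullet> v)"
proof -
  have "(M *\<^sub>v v) \<bullet> (M *\<^sub>v v) = (\<Sum>r<nr. (row M r \<bullet> v)\<^sup>2)"
    using M by (simp add: scalar_prod_def power2_eq_square atLeast0LessThan)
  also have "\<dots> \<le> (\<Sum>r<nr. (row M r \<bullet> row M r) * (v \<bullet> v))"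
    using M v by (intro sum_mono scalar_prod_squared_le) auto
  finally show ?thesis using M by (simp add: frobenius_sq_def sum_distrib_right)
qed

lemma gradient_step_squared_le:
  fixes d y :: "real vec"
  assumes d: "d \<in> carrier_vec n" and y: "y \<in> carrier_vec n"
    and coercive: "\<beta> * (d \<bullet> d) \<le> d \<bullet> y" and bounded: "y \<bullet> y \<le> C * (d \<bullet> d)"
    and "0 \<le> \<alpha>"
  shows "(d - \<alpha> \<cdot>\<^sub>v y) \<bullet> (d - \<alpha> \<cdot>\<^sub>v y) \<le> (1 - 2 * \<alpha> * \<beta> + \<alpha>\<^sup>2 * C) * (d \<bullet> d)"
proof -
  have "(d - \<alpha> \<cdot>\<^sub>v y) \<bullet> (d - \<alpha> \<cdot>\<^sub>v y) = d \<bullet> d - 2 * \<alpha> * (d \<bullet> y) + \<alpha>\<^sup>2 * (y \<bullet> y)"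
    using d y by (simp add: scalar_prod_def power2_eq_square algebra_simps sum.distrib
        sum_subtractf sum_distrib_left)
  also have "\<dots> \<le> d \<bullet> d - 2 * \<alpha> * (\<beta> * (d \<bullet> d)) + \<alpha>\<^sup>2 * (C * (d \<bullet> d))"
    using mult_left_mono[OF coercive, of "2 * \<alpha>"] mult_left_mono[OF bounded, of "\<alpha>\<^sup>2"] \<open>0 \<le> \<alpha>\<close>
    by simp
  finally show ?thesis by (simp add: algebra_simps)
qed

lemma richardson_step_contracts:
  fixes M :: "real mat"
  assumes M: "M \<in> carrier_mat n n" and x: "x \<in> carrier_vec n" and z: "z \<in> carrier_vec n"
    and solution: "M *\<^sub>v z = b"
    and coercive: "\<And>d. d \<in> carrier_vec n \<Longrightarrow> \<beta> * (d \<bullet> d) \<le> d \<bullet> (M *\<^sub>v d)"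
    and bounded: "\<And>d. d \<in> carrier_vec n \<Longrightarrow> (M *\<^sub>v d) \<bullet> (M *\<^sub>v d) \<le> C * (d \<bullet> d)"
    and "0 \<le> \<beta>" and "0 < C"
  shows "vnorm ((x - (\<beta> / C) \<cdot>\<^sub>v (M *\<^sub>v x - b)) - z) \<le> sqrt (1 - \<beta>\<^sup>2 / C) * vnorm (x - z)"
proof -
  define d where "d = x - z"
  have d: "d \<in> carrier_vec n" using x z by (simp add: d_def)
  have "M *\<^sub>v x - b = M *\<^sub>v d"
    using mult_minus_distrib_mat_vec[OF M x z] by (simp add: d_def solution)
  then have step: "(x - (\<beta> / C) \<cdot>\<^sub>v (M *\<^sub>v x - b)) - z = d - (\<beta> / C) \<cdot>\<^sub>v (M *\<^sub>v d)"
    using M x z by (auto simp: d_def)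
  have "(d - (\<beta> / C) \<cdot>\<^sub>v (M *\<^sub>v d)) \<bullet> (d - (\<beta> / C) \<cdot>\<^sub>v (M *\<^sub>v d))
      \<le> (1 - 2 * (\<beta> / C) * \<beta> + (\<beta> / C)\<^sup>2 * C) * (d \<bullet> d)"
    using gradient_step_squared_le[OF d _ coercive[OF d] bounded[OF d], of "\<beta> / C"] M d
      \<open>0 \<le> \<beta>\<close> \<open>0 < C\<close>
    by simp
  also have "\<dots> = (1 - \<beta>\<^sup>2 / C) * (d \<bullet> d)"
    using \<open>0 < C\<close> by (simp add: power2_eq_square field_simps)
  finally show ?thesis
    unfolding vnorm_def step d_def[symmetric] by (simp add: real_sqrt_mult[symmetric])
qed

lemma foldr_append_rows_carrier:
  assumes "\<forall>i\<in>set xs. A i \<in> carrier_mat (nr i) n"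
  shows "foldr (\<lambda>i B. A i @\<^sub>r B) xs (0\<^sub>m 0 n) \<in> carrier_mat (\<Sum>i\<leftarrow>xs. nr i) n"
  using assms by (induction xs) auto

lemma foldr_append_rows_scalar_prod:
  fixes A :: "nat \<Rightarrow> real mat"
  assumes "\<forall>i\<in>set xs. A i \<in> carrier_mat (nr i) n"
    and v: "v \<in> carrier_vec n" and w: "w \<in> carrier_vec n"
  shows "(foldr (\<lambda>i B. A i @\<^sub>r B) xs (0\<^sub>m 0 n) *\<^sub>v v)
      \<bullet> (foldr (\<lambda>i B. A i @\<^sub>r B) xs (0\<^sub>m 0 n) *\<^sub>v w)
    = (\<Sum>i\<leftarrow>xs. (A i *\<^sub>v v) \<bullet> (A i *\<^sub>v w))"
  using assms(1)
proof (induction xs)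
  case Nil
  then show ?case by (simp add: scalar_prod_def)
next
  case (Cons x xs)
  let ?F = "foldr (\<lambda>i B. A i @\<^sub>r B) xs (0\<^sub>m 0 n)"
  have Ax: "A x \<in> carrier_mat (nr x) n" using Cons.prems by simp
  have F: "?F \<in> carrier_mat (\<Sum>i\<leftarrow>xs. nr i) n"
    using Cons.prems by (intro foldr_append_rows_carrier) simp
  have "((A x @\<^sub>r ?F) *\<^sub>v v) \<bullet> ((A x @\<^sub>r ?F) *\<^sub>v w)
      = ((A x *\<^sub>v v) @\<^sub>v (?F *\<^sub>v v)) \<bullet> ((A x *\<^sub>v w) @\<^sub>v (?F *\<^sub>v w))"
    using mat_mult_append[OF Ax F v] mat_mult_append[OF Ax F w] by simp
  also have "\<dots> = (A x *\<^sub>v v) \<bullet> (A x *\<^sub>v w) + (?F *\<^sub>v v) \<bullet> (?F *\<^sub>v w)"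
    using Ax F v w by (intro scalar_prod_append[of _ "nr x" _ "\<Sum>i\<leftarrow>xs. nr i"]) auto
  finally show ?case using Cons by simp
qed

lemma stack_mats_carrier:
  assumes "\<forall>i<m. A i \<in> carrier_mat (nr i) n"
  shows "stack_mats A m n \<in> carrier_mat (\<Sum>i<m. nr i) n"
  using foldr_append_rows_carrier[of "[0..<m]" A nr n] assms
  by (simp add: stack_mats_def sum_list_distinct_conv_sum_set atLeast0LessThan)

lemma stack_mats_scalar_prod:
  fixes A :: "nat \<Rightarrow> real mat"
  assumes "\<forall>i<m. A i \<in> carrier_mat (nr i) n" and "v \<in> carrier_vec n" and "w \<in> carrier_vec n"
  shows "(stack_mats A m n *\<^sub>v v) \<bullet> (stack_mats A m n *\<^sub>v w) = (\<Sum>i<m. (A i *\<^sub>v v) \<bullet> (A i *\<^sub>v w))"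
  using foldr_append_rows_scalar_prod[of "[0..<m]" A nr n v w] assms
  by (simp add: stack_mats_def sum_list_distinct_conv_sum_set atLeast0LessThan)

lemma gram_mult_vec_index:
  fixes S :: "real mat"
  assumes S: "S \<in> carrier_mat N n" and v: "v \<in> carrier_vec n" and r: "r < n"
  shows "((transpose_mat S * S) *\<^sub>v v) $ r = (S *\<^sub>v v) \<bullet> (S *\<^sub>v unit_vec n r)"
proof -
  have "((transpose_mat S * S) *\<^sub>v v) $ r = (transpose_mat S *\<^sub>v (S *\<^sub>v v)) \<bullet> unit_vec n r"
    using S v r by (simp add: assoc_mult_mat_vec[of _ n N])
  also have "\<dots> = (S *\<^sub>v v) \<bullet> (S *\<^sub>v unit_vec n r)"
    using S v r by (intro transpose_vec_mult_scalar) auto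
  finally show ?thesis .
qed

lemma scalar_prod_gram:
  fixes S :: "real mat"
  assumes S: "S \<in> carrier_mat N n" and v: "v \<in> carrier_vec n"
  shows "v \<bullet> ((transpose_mat S * S) *\<^sub>v v) = (S *\<^sub>v v) \<bullet> (S *\<^sub>v v)"
proof -
  have "v \<bullet> ((transpose_mat S * S) *\<^sub>v v) = (transpose_mat S *\<^sub>v (S *\<^sub>v v)) \<bullet> v"
    using S v by (simp add: assoc_mult_mat_vec[of _ n N] comm_scalar_prod[of v n])
  also have "\<dots> = (S *\<^sub>v v) \<bullet> (S *\<^sub>v v)"
    using S v by (intro transpose_vec_mult_scalar) auto
  finally show ?thesis .
qed

lemma eigenvalue_gram_nonneg:
  fixes S :: "real mat"
  assumes S: "S \<in> carrier_mat N n" and "eigenvalue (transpose_mat S * S) \<mu>"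
  shows "0 \<le> \<mu>"
proof -
  obtain v where v: "v \<in> carrier_vec n" "v \<noteq> 0\<^sub>v n" and Gv: "(transpose_mat S * S) *\<^sub>v v = \<mu> \<cdot>\<^sub>v v"
    using assms(2) S unfolding eigenvalue_def eigenvector_def by auto
  have "\<mu> * (v \<bullet> v) = (S *\<^sub>v v) \<bullet> (S *\<^sub>v v)"
    using scalar_prod_gram[OF S v(1)] v by (simp add: Gv)
  then have "0 \<le> \<mu> * (v \<bullet> v)" using scalar_prod_self_nonneg by simp
  with scalar_prod_self_pos[OF v] show ?thesis by (simp add: zero_le_mult_iff)
qed

lemma add_smult_one_mult_vec:
  fixes G :: "'a :: comm_ring_1 mat"
  assumes "G \<in> carrier_mat n n" and "v \<in> carrier_vec n"
  shows "(G + c \<cdot>\<^sub>m 1\<^sub>m n) *\<^sub>v v = G *\<^sub>v v + c \<cdot>\<^sub>v v"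
  using assms by (auto simp: add_mult_distrib_mat_vec[of _ n n] intro!: eq_vecI)

lemma gram_shift_coercive:
  fixes S :: "real mat"
  assumes S: "S \<in> carrier_mat N n" and d: "d \<in> carrier_vec n"
  shows "\<beta> * (d \<bullet> d) \<le> d \<bullet> ((transpose_mat S * S + \<beta> \<cdot>\<^sub>m 1\<^sub>m n) *\<^sub>v d)"
proof -
  have "d \<bullet> ((transpose_mat S * S + \<beta> \<cdot>\<^sub>m 1\<^sub>m n) *\<^sub>v d)
      = d \<bullet> ((transpose_mat S * S) *\<^sub>v d) + \<beta> * (d \<bullet> d)"
    using S d by (simp add: add_smult_one_mult_vec[of _ n] scalar_prod_add_distrib[of _ n])
  also have "\<dots> = (S *\<^sub>v d) \<bullet> (S *\<^sub>v d) + \<beta> * (d \<bullet> d)"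
    by (simp only: scalar_prod_gram[OF S d])
  finally show ?thesis using scalar_prod_self_nonneg[of "S *\<^sub>v d"] by simp
qed

lemma Rres_index:
  fixes A :: "nat \<Rightarrow> real mat"
  assumes Ai: "A i \<in> carrier_mat (nr i) n" and K: "dim_row K = n" and r: "r < n"
  shows "Rres A m n \<beta> K i j $ r
    = (A i *\<^sub>v col K j) \<bullet> (A i *\<^sub>v unit_vec n r) + \<beta> / real m * col K j $ r - 1 / real m * unit_vec n j $ r"
proof -
  have k: "col K j \<in> carrier_vec n" using K by (simp add: carrier_dim_vec)
  have G: "transpose_mat (A i) * A i \<in> carrier_mat n n" using Ai by simp
  have "Rres A m n \<beta> K i j
      = (transpose_mat (A i) * A i) *\<^sub>v col K j + (\<beta> / real m) \<cdot>\<^sub>v col K j - (1 / real m) \<cdot>\<^sub>v unit_vec n j"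
    unfolding Rres_def add_smult_one_mult_vec[OF G k] ..
  then show ?thesis
    using G k r by (simp add: carrier_dim_vec gram_mult_vec_index[OF Ai k r])
qed

lemma sum_Rres_eq:
  fixes A :: "nat \<Rightarrow> real mat"
  assumes A: "\<forall>i<m. A i \<in> carrier_mat (nr i) n" and "0 < m" and K: "dim_row K = n"
  shows "vec n (\<lambda>r. \<Sum>i<m. Rres A m n \<beta> K i j $ r)
    = (transpose_mat (stack_mats A m n) * stack_mats A m n + \<beta> \<cdot>\<^sub>m 1\<^sub>m n) *\<^sub>v col K j - unit_vec n j"
    (is "_ = (?G + _) *\<^sub>v ?k - _")
proof (rule eq_vecI)
  have S: "stack_mats A m n \<in> carrier_mat (\<Sum>i<m. nr i) n" using stack_mats_carrier[OF A] .
  have k: "?k \<in> carrier_vec n" using K by (simp add: carrier_dim_vec)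
  have G: "?G \<in> carrier_mat n n" using S by simp
  fix r assume "r < dim_vec ((?G + \<beta> \<cdot>\<^sub>m 1\<^sub>m n) *\<^sub>v ?k - unit_vec n j)"
  then have r: "r < n" using G by simp
  have "(\<Sum>i<m. Rres A m n \<beta> K i j $ r)
      = (\<Sum>i<m. (A i *\<^sub>v ?k) \<bullet> (A i *\<^sub>v unit_vec n r) + \<beta> / real m * ?k $ r - 1 / real m * unit_vec n j $ r)"
    using A K r by (intro sum.cong) (auto simp: Rres_index)
  also have "\<dots> = (\<Sum>i<m. (A i *\<^sub>v ?k) \<bullet> (A i *\<^sub>v unit_vec n r)) + \<beta> * ?k $ r - unit_vec n j $ r"
    using \<open>0 < m\<close> by (simp add: sum.distrib sum_subtractf)
  also have "\<dots> = (stack_mats A m n *\<^sub>v ?k) \<bullet> (stack_mats A m n *\<^sub>v unit_vec n r)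
      + \<beta> * ?k $ r - unit_vec n j $ r"
    using A k r by (simp add: stack_mats_scalar_prod)
  also have "\<dots> = ((?G + \<beta> \<cdot>\<^sub>m 1\<^sub>m n) *\<^sub>v ?k - unit_vec n j) $ r"
    using G k r by (simp add: carrier_dim_vec add_smult_one_mult_vec[of _ n] gram_mult_vec_index[OF S k r])
  finally show "vec n (\<lambda>r. \<Sum>i<m. Rres A m n \<beta> K i j $ r) $ r
      = ((?G + \<beta> \<cdot>\<^sub>m 1\<^sub>m n) *\<^sub>v ?k - unit_vec n j) $ r"
    using r by simp
qed (use stack_mats_carrier[OF A] in simp)

lemma Kiter_carrier:
  assumes "K0 \<in> carrier_mat n n"
  shows "Kiter A m n \<beta> \<alpha> K0 t \<in> carrier_mat n n"
  using assms by (induction t) (auto simp: Let_def)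

lemma col_Kiter_Suc:
  fixes A :: "nat \<Rightarrow> real mat"
  assumes A: "\<forall>i<m. A i \<in> carrier_mat (nr i) n" and "0 < m" and K0: "K0 \<in> carrier_mat n n"
    and j: "j < n"
  shows "col (Kiter A m n \<beta> \<alpha> K0 (Suc t)) j
    = col (Kiter A m n \<beta> \<alpha> K0 t) j
      - \<alpha> \<cdot>\<^sub>v ((transpose_mat (stack_mats A m n) * stack_mats A m n + \<beta> \<cdot>\<^sub>m 1\<^sub>m n)
                  *\<^sub>v col (Kiter A m n \<beta> \<alpha> K0 t) j - unit_vec n j)"
proof -
  let ?K = "Kiter A m n \<beta> \<alpha> K0 t"
  have K: "dim_row ?K = n" using Kiter_carrier[OF K0] by blast
  let ?step = "\<lambda>j. col ?K j - \<alpha> \<cdot>\<^sub>v vec n (\<lambda>r. \<Sum>i<m. Rres A m n \<beta> ?K i j $ r)"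
  have "col (Kiter A m n \<beta> \<alpha> K0 (Suc t)) j = col (mat_of_cols n (map ?step [0..<n])) j"
    by (simp only: Kiter.simps Let_def)
  also have "\<dots> = ?step j"
    using j by (subst col_mat_of_cols) (auto simp: carrier_dim_vec)
  also have "\<dots> = col ?K j - \<alpha> \<cdot>\<^sub>v ((transpose_mat (stack_mats A m n) * stack_mats A m n
                    + \<beta> \<cdot>\<^sub>m 1\<^sub>m n) *\<^sub>v col ?K j - unit_vec n j)"
    unfolding sum_Rres_eq[OF A \<open>0 < m\<close> K] ..
  finally show ?thesis .
qed

lemma inverts_mat_mult_col:
  assumes "inverts_mat M K" and "M \<in> carrier_mat n n" and "K \<in> carrier_mat n n" and "j < n"
  shows "M *\<^sub>v col K j = unit_vec n j"
  using assms col_mult2[of M n n K n j] by (simp add: inverts_mat_def)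

lemma Kiter_col_contracts:
  fixes A :: "nat \<Rightarrow> real mat" and m n :: nat and \<beta> :: real
  defines "M \<equiv> transpose_mat (stack_mats A m n) * stack_mats A m n + \<beta> \<cdot>\<^sub>m 1\<^sub>m n"
  assumes A: "\<forall>i<m. A i \<in> carrier_mat (nr i) n" and "0 < m" and "0 \<le> \<beta>"
    and K0: "K0 \<in> carrier_mat n n" and Kst: "Kst \<in> carrier_mat n n" and "inverts_mat M Kst"
    and "frobenius_sq M \<le> C" and "0 < C" and j: "j < n"
  shows "vnorm (col (Kiter A m n \<beta> (\<beta> / C) K0 (Suc t)) j - col Kst j)
    \<le> sqrt (1 - \<beta>\<^sup>2 / C) * vnorm (col (Kiter A m n \<beta> (\<beta> / C) K0 t) j - col Kst j)"
proof -
  have S: "stack_mats A m n \<in> carrier_mat (\<Sum>i<m. nr i) n" using stack_mats_carrier[OF A] .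
  then have M: "M \<in> carrier_mat n n" by (simp add: M_def)
  have coercive: "\<beta> * (d \<bullet> d) \<le> d \<bullet> (M *\<^sub>v d)" if "d \<in> carrier_vec n" for d
    unfolding M_def using gram_shift_coercive[OF S that] .
  have bounded: "(M *\<^sub>v d) \<bullet> (M *\<^sub>v d) \<le> C * (d \<bullet> d)" if "d \<in> carrier_vec n" for d
    using mult_mat_vec_squared_le[OF M that] mult_right_mono[OF \<open>frobenius_sq M \<le> C\<close>]
      scalar_prod_self_nonneg[of d]
    by (meson order_trans)
  have solution: "M *\<^sub>v col Kst j = unit_vec n j"
    using inverts_mat_mult_col[OF \<open>inverts_mat M Kst\<close> M Kst j] .
  show ?thesis
    unfolding col_Kiter_Suc[OF A \<open>0 < m\<close> K0 j] M_def[symmetric]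
    using Kiter_carrier[OF K0] Kst j \<open>0 \<le> \<beta>\<close> \<open>0 < C\<close>
    by (intro richardson_step_contracts[OF M _ _ solution coercive bounded]) auto
qed

lemma convergence_ratio_bounds:
  fixes lam gam \<beta> :: real
  assumes "0 \<le> gam" and "gam \<le> lam" and "0 < \<beta>"
  shows "0 \<le> (lam - gam) / (lam + gam + 2 * \<beta>)" and "(lam - gam) / (lam + gam + 2 * \<beta>) < 1"
  using assms by (simp_all add: divide_less_eq)

theorem lemma1:
  fixes m n :: nat and nr :: "nat \<Rightarrow> nat" and A :: "nat \<Rightarrow> real mat"
    and lam gam \<beta> :: real and Kst K0 :: "real mat"
  assumes m_pos: "0 < m" and n_pos: "0 < n"
    and A_dims: "\<forall>i<m. A i \<in> carrier_mat (nr i) n"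
    and N_ge: "(\<Sum>i<m. nr i) \<ge> n"
    and full_rank: "vec_space.rank n (transpose_mat (stack_mats A m n) * stack_mats A m n) = n"
    and lam_eig: "eigenvalue (transpose_mat (stack_mats A m n) * stack_mats A m n) lam"
    and lam_max: "\<forall>\<mu>. eigenvalue (transpose_mat (stack_mats A m n) * stack_mats A m n) \<mu> \<longrightarrow> \<mu> \<le> lam"
    and gam_eig: "eigenvalue (transpose_mat (stack_mats A m n) * stack_mats A m n) gam"
    and gam_min: "\<forall>\<mu>. eigenvalue (transpose_mat (stack_mats A m n) * stack_mats A m n) \<mu> \<longrightarrow> gam \<le> \<mu>"
    and beta_pos: "0 < \<beta>"
    and Kst_dim: "Kst \<in> carrier_mat n n"
    and Kst_inv1: "inverts_mat (transpose_mat (stack_mats A m n) * stack_mats A m n + \<beta> \<cdot>\<^sub>m 1\<^sub>m n) Kst"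
    and Kst_inv2: "inverts_mat Kst (transpose_mat (stack_mats A m n) * stack_mats A m n + \<beta> \<cdot>\<^sub>m 1\<^sub>m n)"
    and K0_dim: "K0 \<in> carrier_mat n n"
  shows "\<exists>\<alpha>>0. \<exists>\<rho>K. 0 < \<rho>K \<and> \<rho>K < 1 \<and> \<rho>K \<ge> (lam - gam) / (lam + gam + 2 * \<beta>) \<and>
           (\<forall>j<n. \<forall>t. vnorm (col (Kiter A m n \<beta> \<alpha> K0 (Suc t)) j - col Kst j)
                        \<le> \<rho>K * vnorm (col (Kiter A m n \<beta> \<alpha> K0 t) j - col Kst j))"
proof -
  define M where "M = transpose_mat (stack_mats A m n) * stack_mats A m n + \<beta> \<cdot>\<^sub>m 1\<^sub>m n"
  define C where "C = frobenius_sq M + 1"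
  define q where "q = sqrt (1 - \<beta>\<^sup>2 / C)"
  define \<rho>st where "\<rho>st = (lam - gam) / (lam + gam + 2 * \<beta>)"
  \<comment> \<open>the second term keeps \<open>\<rho>\<close> positive even if \<open>q = \<rho>st = 0\<close>\<close>
  define \<rho> where "\<rho> = max q ((1 + \<rho>st) / 2)"
  have "0 < C" using frobenius_sq_nonneg[of M] by (simp add: C_def)
  have "0 \<le> gam" using eigenvalue_gram_nonneg[OF stack_mats_carrier[OF A_dims] gam_eig] .
  then have "0 \<le> \<rho>st" "\<rho>st < 1"
    unfolding \<rho>st_def using convergence_ratio_bounds lam_max gam_eig beta_pos by auto
  moreover have "q < 1" using beta_pos \<open>0 < C\<close> by (simp add: q_def)
  ultimately have \<rho>: "0 < \<rho>" "\<rho> < 1" "\<rho>st \<le> \<rho>"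
    by (auto simp: \<rho>_def less_max_iff_disj le_max_iff_disj)
  have "frobenius_sq M \<le> C" by (simp add: C_def)
  note contracts = Kiter_col_contracts[OF A_dims m_pos less_imp_le[OF beta_pos] K0_dim Kst_dim Kst_inv1
      this[unfolded M_def] \<open>0 < C\<close>, folded q_def]
  have "q * vnorm v \<le> \<rho> * vnorm v" for v
    by (intro mult_right_mono vnorm_nonneg) (simp add: \<rho>_def)
  then have "\<forall>j<n. \<forall>t. vnorm (col (Kiter A m n \<beta> (\<beta> / C) K0 (Suc t)) j - col Kst j)
      \<le> \<rho> * vnorm (col (Kiter A m n \<beta> (\<beta> / C) K0 t) j - col Kst j)"
    using order_trans[OF contracts] by blast
  moreover have "0 < \<beta> / C" using beta_pos \<open>0 < C\<close> by simp
  ultimately show ?thesis using \<rho> unfolding \<rho>st_def by blast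
qed

end
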